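(* Let $F:\mathbb{R}^N\times\mathbb{R}\times\mathbb{R}^N\times S^N\to\mathbb{R}$ be continuous and uniformly elliptic: there are $0<\lambda\le\Lambda$ with $\lambda\,\mathrm{tr}(Q)\le F(x,t,p,X)-F(x,t,p,X+Q)\le\Lambda\,\mathrm{tr}(Q)$ for all $x,p,t,X$ and all $Q\in S^N$, $Q\ge0$. Assume $F(x,t,p,0)\le-\bar b(x)\cdot p+g(x)|p|+\bar c(x)t$ for all $x,t,p$, where $\bar b:\mathbb{R}^N\to\mathbb{R}^N$ and $g:\mathbb{R}^N\to\mathbb{R}$ are locally Lipschitz, $\bar c:\mathbb{R}^N\to\mathbb{R}$ is continuous, $g\ge0$, $\bar c\ge0$, and for some $R_o>0$ $$\bar b(x)\cdot x+g(x)|x|\le\bar c(x)|x|^2\log|x|+\lambda-(N-1)\Lambda\quad\text{for }|x|\ge R_o.$$ Let $v\in LSC(\mathbb{R}^N)$ be a viscosity supersolution of $F(x,v,Dv,D^2v)=0$ in $\mathbb{R}^N$ with $\liminf_{|x|\to\infty}v(x)/\log|x|\ge0$. If either $\bar c\equiv0$ or $v\le0$, then $v$ is constant.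
   Context: $S^N$ is the space of real symmetric $N\times N$ matrices. *)

theory Defs
  imports "HOL-Analysis.Analysis"
begin

definition symmetric_mat :: "real^'n^'n \<Rightarrow> bool" where
  "symmetric_mat X \<longleftrightarrow> transpose X = X"

definition psd_mat :: "real^'n^'n \<Rightarrow> bool" where
  "psd_mat Q \<longleftrightarrow> (\<forall>\<xi>. 0 \<le> \<xi> \<bullet> (Q *v \<xi>))"

definition lsc :: "('a::topological_space \<Rightarrow> real) \<Rightarrow> bool" where
  "lsc v \<longleftrightarrow> (\<forall>x a. a < v x \<longrightarrow> eventually (\<lambda>y. a < v y) (at x))"

definition locally_lipschitz :: "('a::metric_space \<Rightarrow> 'b::metric_space) \<Rightarrow> bool" where
  "locally_lipschitz f \<longleftrightarrow> (\<forall>x. \<exists>r>0. \<exists>L. L-lipschitz_on (ball x r) f)"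

definition C2_with :: "(real^'n \<Rightarrow> real) \<Rightarrow> (real^'n \<Rightarrow> real^'n) \<Rightarrow> (real^'n \<Rightarrow> real^'n^'n) \<Rightarrow> bool" where
  "C2_with \<phi> D\<phi> H \<longleftrightarrow>
     (\<forall>x. (\<phi> has_derivative (\<lambda>h. D\<phi> x \<bullet> h)) (at x)) \<and>
     (\<forall>x. (D\<phi> has_derivative (\<lambda>h. H x *v h)) (at x)) \<and>
     continuous_on UNIV H"

(* viscosity supersolution of F(x,v,Dv,D^2v) = 0 in R^N (Crandall-Ishii-Lions convention) *)
definition viscosity_supersolution ::
  "(real^'n \<Rightarrow> real \<Rightarrow> real^'n \<Rightarrow> real^'n^'n \<Rightarrow> real) \<Rightarrow> (real^'n \<Rightarrow> real) \<Rightarrow> bool" where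
  "viscosity_supersolution F v \<longleftrightarrow> lsc v \<and>
     (\<forall>\<phi> D\<phi> H x0. C2_with \<phi> D\<phi> H \<longrightarrow>
        (\<exists>r>0. \<forall>y\<in>ball x0 r. v x0 - \<phi> x0 \<le> v y - \<phi> y) \<longrightarrow>
        F x0 (v x0) (D\<phi> x0) (H x0) \<ge> 0)"

end

theory Submission
  imports Defs
begin

text \<open>
  Everything rests on a comparison principle: a \<open>C\<^sup>2\<close> function that is a strict classical
  subsolution wherever it lies above the supersolution \<open>v\<close> cannot touch \<open>v\<close> from below inside
  an annulus, so it stays below \<open>v\<close> there once it does so on the two boundary spheres.

  First, \<open>v\<close> attains its infimum. Let \<open>M\<close> be the minimum of \<open>v\<close> on a ball \<open>|x| \<le> R\<^sub>1\<close> and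
  suppose \<open>v\<close> is smaller at some point \<open>x\<^sub>h\<close> outside. The radial function
  \<open>M - (a/2) ln(|x|\<^sup>2 + \<sigma>) + \<beta> |x|\<^sup>2/2\<close> lies below \<open>v\<close> on \<open>|x| = R\<^sub>1\<close> and, since
  \<open>v \<ge> -(a/2) ln |x|\<close> far out, also on a large sphere \<open>|x| = R\<^sub>2\<close>. The growth condition on \<open>b\<close>
  and \<open>g\<close> makes it a strict subsolution where it lies above \<open>v\<close>, so it stays below \<open>v\<close>; yet for
  small \<open>a\<close> it exceeds \<open>v\<close> at \<open>x\<^sub>h\<close>.

  Second, the minimum \<open>m\<close> is attained on an open set. If \<open>v z > m\<close>, take a point \<open>x\<^sub>s\<close> of
  \<open>{v = m}\<close> nearest to \<open>z\<close>, at distance \<open>\<rho>\<close>. The Hopf barrier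
  \<open>m + \<mu> (exp(-\<alpha> |x - z|\<^sup>2) - exp(-\<alpha> \<rho>\<^sup>2))\<close> with large \<open>\<alpha>\<close> is a strict subsolution on
  \<open>\<rho>/2 \<le> |x - z| \<le> \<rho>\<close> and lies below \<open>v\<close> on both spheres, hence outside \<open>ball z (\<rho>/2)\<close>;
  but it touches \<open>v\<close> from below at \<open>x\<^sub>s\<close>, contradicting the supersolution property there.
\<close>

definition outer_prod :: "real^'n \<Rightarrow> real^'n^'n" where
  "outer_prod y = (\<chi> i j. y$i * y$j)"

lemma outer_prod_mult_vec: "outer_prod y *v h = (y \<bullet> h) *\<^sub>R y"
  by (simp add: outer_prod_def matrix_vector_mult_def inner_vec_def vec_eq_iff
      sum_distrib_left mult.assoc mult.commute mult.left_commute)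

lemma symmetric_outer_prod: "symmetric_mat (outer_prod y)"
  by (simp add: symmetric_mat_def outer_prod_def transpose_def vec_eq_iff mult.commute)

lemma psd_outer_prod: "psd_mat (outer_prod y)"
  by (simp add: psd_mat_def outer_prod_mult_vec inner_commute)

lemma trace_outer_prod: "trace (outer_prod y) = (norm y)\<^sup>2"
  by (simp add: trace_def outer_prod_def power2_norm_eq_inner inner_vec_def)

lemma continuous_on_outer_prod:
  "continuous_on S f \<Longrightarrow> continuous_on S (\<lambda>x. outer_prod (f x :: real^'n))"
  unfolding outer_prod_def by (intro continuous_on_vec_lambda continuous_intros)

lemma symmetric_mat_1: "symmetric_mat (mat 1 :: real^'n^'n)"
  by (simp add: symmetric_mat_def)

lemma symmetric_mat_0: "symmetric_mat (0 :: real^'n^'n)"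
  by (simp add: symmetric_mat_def transpose_def vec_eq_iff)

lemma symmetric_mat_diff: "symmetric_mat A \<Longrightarrow> symmetric_mat B \<Longrightarrow> symmetric_mat (A - B)"
  by (simp add: symmetric_mat_def transpose_def vec_eq_iff)

lemma symmetric_mat_scaleR: "symmetric_mat A \<Longrightarrow> symmetric_mat (c *\<^sub>R A)"
  by (simp add: symmetric_mat_def transpose_scalar)

lemma psd_mat_scaleR: "psd_mat A \<Longrightarrow> 0 \<le> c \<Longrightarrow> psd_mat (c *\<^sub>R A)"
  by (simp add: psd_mat_def flip: scaleR_matrix_vector_assoc)

lemma trace_scaleR: "trace (c *\<^sub>R A) = c * trace (A :: real^'n^'n)"
  by (simp add: trace_def sum_distrib_left)

lemma psd_mat_1_minus_projection:
  fixes y :: "real^'n"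
  assumes "y \<noteq> 0"
  shows "psd_mat (mat 1 - (1 / (norm y)\<^sup>2) *\<^sub>R outer_prod y)"
  unfolding psd_mat_def
proof
  fix \<xi> :: "real^'n"
  have "(y \<bullet> \<xi>)\<^sup>2 \<le> (norm y)\<^sup>2 * (norm \<xi>)\<^sup>2"
    by (metis Cauchy_Schwarz_ineq2 abs_le_square_iff norm_mult power_mult_distrib
        abs_norm_cancel real_norm_def)
  then have "(y \<bullet> \<xi>)\<^sup>2 / (norm y)\<^sup>2 \<le> (norm \<xi>)\<^sup>2"
    using assms by (simp add: divide_le_eq mult.commute)
  moreover have "\<xi> \<bullet> ((mat 1 - (1 / (norm y)\<^sup>2) *\<^sub>R outer_prod y) *v \<xi>)
      = (norm \<xi>)\<^sup>2 - (y \<bullet> \<xi>)\<^sup>2 / (norm y)\<^sup>2"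
    by (simp add: matrix_vector_mult_diff_rdistrib outer_prod_mult_vec inner_diff_right
        power2_eq_square inner_commute flip: scaleR_matrix_vector_assoc power2_norm_eq_inner)
  ultimately show "0 \<le> \<xi> \<bullet> ((mat 1 - (1 / (norm y)\<^sup>2) *\<^sub>R outer_prod y) *v \<xi>)"
    by simp
qed

section \<open>Radial test functions\<close>

text \<open>Gradient and Hessian of \<open>x \<mapsto> G (|x - z|\<^sup>2)\<close>, where \<open>G'\<close> and \<open>G''\<close> are the first two
  derivatives of \<open>G\<close>.\<close>

definition radial_grad :: "(real \<Rightarrow> real) \<Rightarrow> real^'n \<Rightarrow> real^'n \<Rightarrow> real^'n" where
  "radial_grad G' z x = (2 * G' ((norm (x - z))\<^sup>2)) *\<^sub>R (x - z)"

definition radial_hess ::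
  "(real \<Rightarrow> real) \<Rightarrow> (real \<Rightarrow> real) \<Rightarrow> real^'n \<Rightarrow> real^'n \<Rightarrow> real^'n^'n" where
  "radial_hess G' G'' z x =
     (2 * G' ((norm (x - z))\<^sup>2)) *\<^sub>R mat 1 + (4 * G'' ((norm (x - z))\<^sup>2)) *\<^sub>R outer_prod (x - z)"

lemma has_derivative_norm_diff_power2:
  fixes x z :: "real^'n"
  shows "((\<lambda>x. (norm (x - z))\<^sup>2) has_derivative (\<lambda>h. 2 * ((x - z) \<bullet> h))) (at x)"
proof -
  have "((\<lambda>x. (x - z) \<bullet> (x - z)) has_derivative
      (\<lambda>h. (x - z) \<bullet> (h - 0) + (h - 0) \<bullet> (x - z))) (at x)"
    by (intro has_derivative_inner has_derivative_diff has_derivative_ident has_derivative_const)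
  then show ?thesis
    by (simp add: inner_commute flip: power2_norm_eq_inner mult_2)
qed

lemma isCont_radial:
  fixes z :: "real^'n"
  assumes "isCont G ((norm (x - z))\<^sup>2)"
  shows "isCont (\<lambda>x. G ((norm (x - z))\<^sup>2)) x"
  using assms by (rule isCont_o2[rotated]) (intro continuous_intros)

lemma C2_with_radial:
  fixes G G' G'' :: "real \<Rightarrow> real" and z :: "real^'n"
  assumes G': "\<And>s. 0 \<le> s \<Longrightarrow> (G has_real_derivative G' s) (at s)"
    and G'': "\<And>s. 0 \<le> s \<Longrightarrow> (G' has_real_derivative G'' s) (at s)"
    and cont: "\<And>s. 0 \<le> s \<Longrightarrow> isCont G'' s"
  shows "C2_with (\<lambda>x. G ((norm (x - z))\<^sup>2)) (radial_grad G' z) (radial_hess G' G'' z)"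
  unfolding C2_with_def
proof (intro conjI allI)
  fix x :: "real^'n"
  let ?s = "(norm (x - z))\<^sup>2"
  have "((\<lambda>x. G ((norm (x - z))\<^sup>2)) has_derivative (\<lambda>h. G' ?s * (2 * ((x - z) \<bullet> h)))) (at x)"
    using has_derivative_compose[OF has_derivative_norm_diff_power2
        has_field_derivative_imp_has_derivative[OF G']] by simp
  then show "((\<lambda>x. G ((norm (x - z))\<^sup>2)) has_derivative (\<lambda>h. radial_grad G' z x \<bullet> h)) (at x)"
    by (simp add: radial_grad_def algebra_simps)
  have "((\<lambda>x. G' ((norm (x - z))\<^sup>2)) has_derivative (\<lambda>h. G'' ?s * (2 * ((x - z) \<bullet> h)))) (at x)"
    using has_derivative_compose[OF has_derivative_norm_diff_power2
        has_field_derivative_imp_has_derivative[OF G'']] by simp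
  then have "(radial_grad G' z has_derivative
      (\<lambda>h. (2 * G' ?s) *\<^sub>R h + (2 * (G'' ?s * (2 * ((x - z) \<bullet> h)))) *\<^sub>R (x - z))) (at x)"
    unfolding radial_grad_def
    by (intro has_derivative_scaleR has_derivative_mult_right)
      (auto intro!: derivative_eq_intros simp: mult.assoc)
  then show "(radial_grad G' z has_derivative (\<lambda>h. radial_hess G' G'' z x *v h)) (at x)"
    by (simp add: radial_hess_def matrix_vector_mult_add_rdistrib outer_prod_mult_vec
        matrix_vector_mul_lid mult.assoc flip: scaleR_matrix_vector_assoc)
next
  have "isCont G' s" "isCont G'' s" if "0 \<le> s" for s
    using DERIV_isCont[OF G''[OF that]] cont[OF that] by auto
  then have "continuous_on UNIV (\<lambda>x. G' ((norm (x - z))\<^sup>2))"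
    "continuous_on UNIV (\<lambda>x. G'' ((norm (x - z))\<^sup>2))"
    by (auto intro!: continuous_at_imp_continuous_on isCont_radial)
  then show "continuous_on UNIV (radial_hess G' G'' z)"
    unfolding radial_hess_def
    by (intro continuous_intros continuous_on_outer_prod)
qed

lemma lsc_diff_continuous:
  fixes v \<phi> :: "'a::metric_space \<Rightarrow> real"
  assumes "lsc v" "continuous_on UNIV \<phi>"
  shows "lsc (\<lambda>x. v x - \<phi> x)"
  unfolding lsc_def
proof (intro allI impI)
  fix x a assume a: "a < v x - \<phi> x"
  define e where "e = (v x - \<phi> x - a) / 2"
  have e: "e > 0" and e2: "2 * e = v x - \<phi> x - a" using a by (simp_all add: e_def)
  have "eventually (\<lambda>y. v x - e < v y) (at x)"
    using assms(1) e unfolding lsc_def by simp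
  moreover have "eventually (\<lambda>y. dist (\<phi> y) (\<phi> x) < e) (at x)"
    using assms(2) e by (intro tendstoD) (simp add: continuous_on_eq_continuous_at isCont_def)
  ultimately show "eventually (\<lambda>y. a < v y - \<phi> y) (at x)"
  proof eventually_elim
    case (elim y)
    have "\<phi> y - \<phi> x < e" using elim(2) by (simp add: dist_real_def abs_less_iff)
    then show ?case using elim(1) e2 by linarith
  qed
qed

lemma lsc_attains_min:
  fixes f :: "'a::topological_space \<Rightarrow> real"
  assumes "lsc f" "compact K" "K \<noteq> {}"
  obtains x where "x \<in> K" "\<And>y. y \<in> K \<Longrightarrow> f x \<le> f y"
proof -
  have "\<exists>x\<in>K. \<forall>y\<in>K. f x \<le> f y"
  proof (rule ccontr)
    assume "\<not> ?thesis"
    then have "\<forall>x\<in>K. \<exists>y\<in>K. f y < f x" by (auto simp: not_le)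
    then obtain smaller where smaller: "\<And>x. x \<in> K \<Longrightarrow> smaller x \<in> K \<and> f (smaller x) < f x"
      by metis
    have "\<forall>x\<in>K. \<exists>U. open U \<and> x \<in> U \<and> (\<forall>y\<in>U. f (smaller x) < f y)"
    proof
      fix x assume x: "x \<in> K"
      have "eventually (\<lambda>y. f (smaller x) < f y) (at x)"
        using assms(1) smaller[OF x] unfolding lsc_def by blast
      then obtain U where "open U" "x \<in> U" "\<And>y. y \<in> U \<Longrightarrow> y \<noteq> x \<Longrightarrow> f (smaller x) < f y"
        unfolding eventually_at_topological by blast
      then show "\<exists>U. open U \<and> x \<in> U \<and> (\<forall>y\<in>U. f (smaller x) < f y)"
        using smaller[OF x] by metis
    qed
    then obtain U where U: "\<And>x. x \<in> K \<Longrightarrow> open (U x) \<and> x \<in> U x \<and> (\<forall>y\<in>U x. f (smaller x) < f y)"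
      by metis
    obtain C where C: "C \<subseteq> K" "finite C" "K \<subseteq> (\<Union>c\<in>C. U c)"
      by (rule compactE_image[OF assms(2), of K U]) (use U in auto)
    have "C \<noteq> {}" using C(3) assms(3) by auto
    define m where "m = Min ((\<lambda>c. f (smaller c)) ` C)"
    have "m \<in> (\<lambda>c. f (smaller c)) ` C"
      unfolding m_def using C(2) \<open>C \<noteq> {}\<close> by (intro Min_in) auto
    then obtain j where j: "j \<in> C" "m = f (smaller j)" by auto
    have "smaller j \<in> K" using smaller j(1) C(1) by auto
    then obtain i where i: "i \<in> C" "smaller j \<in> U i" using C(3) by auto
    have "f (smaller i) < f (smaller j)" using U i C(1) by auto
    moreover have "m \<le> f (smaller i)" unfolding m_def using C(2) i(1) by (intro Min_le) auto
    ultimately show False using j by simp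
  qed
  then show thesis using that by blast
qed

lemma closed_lsc_sublevel:
  fixes f :: "'a::topological_space \<Rightarrow> real"
  assumes "lsc f"
  shows "closed {x. f x \<le> m}"
proof -
  have "open {x. m < f x}"
  proof (subst open_subopen, intro ballI)
    fix x assume "x \<in> {x. m < f x}"
    then have "eventually (\<lambda>y. m < f y) (at x)"
      using assms unfolding lsc_def by auto
    then obtain U where "open U" "x \<in> U" "\<And>y. y \<in> U \<Longrightarrow> y \<noteq> x \<Longrightarrow> m < f y"
      unfolding eventually_at_topological by blast
    then show "\<exists>T. open T \<and> x \<in> T \<and> T \<subseteq> {x. m < f x}"
      using \<open>x \<in> {x. m < f x}\<close> by (intro exI[of _ U]) auto
  qed
  moreover have "- {x. f x \<le> m} = {x. m < f x}" by auto
  ultimately show ?thesis by (simp add: closed_def)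
qed

lemma lsc_nearest_sublevel_point:
  fixes v :: "'a::heine_borel \<Rightarrow> real"
  assumes "lsc v" "v x\<^sub>1 \<le> m" "m < v z"
  obtains x\<^sub>s where "v x\<^sub>s \<le> m" "0 < dist z x\<^sub>s" "\<And>y. dist z y < dist z x\<^sub>s \<Longrightarrow> m < v y"
proof -
  have "closed {x. v x \<le> m}" using assms(1) by (rule closed_lsc_sublevel)
  moreover have "{x. v x \<le> m} \<noteq> {}" using assms(2) by blast
  ultimately obtain x\<^sub>s where x\<^sub>s: "x\<^sub>s \<in> {x. v x \<le> m}"
    and nearest: "\<And>y. y \<in> {x. v x \<le> m} \<Longrightarrow> dist z x\<^sub>s \<le> dist z y"
    by (rule distance_attains_inf[of _ z]) blast
  show thesis
  proof (rule that)
    show "v x\<^sub>s \<le> m" using x\<^sub>s by simp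
    then show "0 < dist z x\<^sub>s" using assms(3) by auto
    show "m < v y" if "dist z y < dist z x\<^sub>s" for y
      using nearest[of y] that by (meson mem_Collect_eq not_le)
  qed
qed

lemma continuous_on_locally_lipschitz:
  fixes f :: "'a::metric_space \<Rightarrow> 'b::metric_space"
  assumes "locally_lipschitz f"
  shows "continuous_on UNIV f"
proof (rule continuous_at_imp_continuous_on, intro ballI)
  fix x
  obtain r L where "r > 0" "L-lipschitz_on (ball x r) f"
    using assms unfolding locally_lipschitz_def by blast
  then have "continuous_on (ball x r) f" by (simp add: lipschitz_on_continuous_on)
  then show "isCont f x" using \<open>r > 0\<close> by (simp add: continuous_on_eq_continuous_at)
qed

section \<open>Comparison with strict classical subsolutions\<close>

lemma viscosity_supersolution_lsc: "viscosity_supersolution F v \<Longrightarrow> lsc v"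
  by (simp add: viscosity_supersolution_def)

lemma viscosity_supersolutionD:
  assumes "viscosity_supersolution F v" "C2_with \<phi> D\<phi> H" "0 < r"
    and "\<And>y. y \<in> ball x0 r \<Longrightarrow> v x0 - \<phi> x0 \<le> v y - \<phi> y"
  shows "0 \<le> F x0 (v x0) (D\<phi> x0) (H x0)"
  using assms unfolding viscosity_supersolution_def by blast

lemma supersolution_ge_strict_subsolution:
  fixes v \<phi> :: "real^'n \<Rightarrow> real"
  assumes super: "viscosity_supersolution F v"
    and C2: "C2_with \<phi> D\<phi> H"
    and K: "compact K" and U: "open U" "U \<subseteq> K"
    and boundary: "\<And>x. x \<in> K - U \<Longrightarrow> \<phi> x \<le> v x"
    and strict: "\<And>x. x \<in> U \<Longrightarrow> v x < \<phi> x \<Longrightarrow> F x (v x) (D\<phi> x) (H x) < 0"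
    and x: "x \<in> K"
  shows "\<phi> x \<le> v x"
proof (rule ccontr)
  assume "\<not> \<phi> x \<le> v x"
  have "continuous_on UNIV \<phi>"
    using C2 unfolding C2_with_def
    by (meson continuous_at_imp_continuous_on has_derivative_continuous)
  moreover note viscosity_supersolution_lsc[OF super]
  ultimately obtain x0 where x0: "x0 \<in> K" "\<And>y. y \<in> K \<Longrightarrow> v x0 - \<phi> x0 \<le> v y - \<phi> y"
    using lsc_attains_min[OF lsc_diff_continuous K] x by blast
  have below: "v x0 < \<phi> x0"
    using x0(2)[OF x] \<open>\<not> \<phi> x \<le> v x\<close> by linarith
  have "x0 \<in> U"
  proof (rule ccontr)
    assume "x0 \<notin> U"
    then have "\<phi> x0 \<le> v x0" using boundary x0(1) by blast
    with below show False by simp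
  qed
  then obtain r where "r > 0" "ball x0 r \<subseteq> U"
    using U(1) open_contains_ball by blast
  then have "0 \<le> F x0 (v x0) (D\<phi> x0) (H x0)"
    by (intro viscosity_supersolutionD[OF super C2 \<open>0 < r\<close>])
      (use x0(2) \<open>ball x0 r \<subseteq> U\<close> U(2) in blast)
  with strict[OF \<open>x0 \<in> U\<close> below] show False by simp
qed

lemma supersolution_ge_strict_subsolution_annulus:
  fixes v \<phi> :: "real^'n \<Rightarrow> real"
  assumes super: "viscosity_supersolution F v"
    and C2: "C2_with \<phi> D\<phi> H"
    and boundary: "\<And>x. dist z x = r\<^sub>1 \<or> dist z x = r\<^sub>2 \<Longrightarrow> \<phi> x \<le> v x"
    and strict: "\<And>x. r\<^sub>1 < dist z x \<Longrightarrow> dist z x < r\<^sub>2 \<Longrightarrow> v x < \<phi> x \<Longrightarrow>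
        F x (v x) (D\<phi> x) (H x) < 0"
    and "r\<^sub>1 \<le> dist z x" "dist z x \<le> r\<^sub>2"
  shows "\<phi> x \<le> v x"
proof (rule supersolution_ge_strict_subsolution[OF super C2])
  show "compact (cball z r\<^sub>2 - ball z r\<^sub>1)" "open (ball z r\<^sub>2 - cball z r\<^sub>1)"
    by (auto intro: compact_diff)
qed (use assms in auto)

locale uniformly_elliptic =
  fixes F :: "real^'n \<Rightarrow> real \<Rightarrow> real^'n \<Rightarrow> real^'n^'n \<Rightarrow> real"
    and lam Lam :: real
    and b :: "real^'n \<Rightarrow> real^'n"
    and g c :: "real^'n \<Rightarrow> real"
  assumes lam_pos: "0 < lam" and lam_le_Lam: "lam \<le> Lam"
    and elliptic: "\<And>x t p X Q. symmetric_mat X \<Longrightarrow> symmetric_mat Q \<Longrightarrow> psd_mat Q \<Longrightarrow>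
        lam * trace Q \<le> F x t p X - F x t p (X + Q) \<and> F x t p X - F x t p (X + Q) \<le> Lam * trace Q"
    and F_bound: "\<And>x t p. F x t p 0 \<le> - (b x \<bullet> p) + g x * norm p + c x * t"
    and g_nonneg: "\<And>x. 0 \<le> g x"
begin

lemma F_le_Pucci:
  assumes "symmetric_mat A" "symmetric_mat B" "psd_mat A" "psd_mat B"
  shows "F x t p (A - B) \<le> F x t p 0 - lam * trace A + Lam * trace B"
proof -
  have "F x t p (A - B) - F x t p A \<le> Lam * trace B"
    using elliptic[OF symmetric_mat_diff[OF assms(1,2)] assms(2,4), of x t p] by simp
  moreover have "lam * trace A \<le> F x t p 0 - F x t p A"
    using elliptic[OF symmetric_mat_0 assms(1,3), of x t p] by simp
  ultimately show ?thesis by linarith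
qed

text \<open>The Hessian is \<open>A - B\<close> with \<open>A = (2 G\<^sub>1 + 4 G\<^sub>2 |y|\<^sup>2) P\<close> and \<open>B = -2 G\<^sub>1 (I - P)\<close>,
  where \<open>P\<close> is the projection onto \<open>y\<close>; both are positive semidefinite and \<open>tr (I - P) = N - 1\<close>.\<close>

lemma F_radial_le:
  assumes y: "y \<noteq> 0" and G1: "G1 \<le> 0" and radial: "0 \<le> 2 * G1 + 4 * G2 * (norm y)\<^sup>2"
  shows "F x t ((2 * G1) *\<^sub>R y) ((2 * G1) *\<^sub>R mat 1 + (4 * G2) *\<^sub>R outer_prod y)
     \<le> -2 * G1 * (b x \<bullet> y + g x * norm y) + c x * t - lam * (2 * G1 + 4 * G2 * (norm y)\<^sup>2)
        - 2 * (real CARD('n) - 1) * Lam * G1"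
proof -
  define P where "P = (1 / (norm y)\<^sup>2) *\<^sub>R outer_prod y"
  define A where "A = (2 * G1 + 4 * G2 * (norm y)\<^sup>2) *\<^sub>R P"
  define B where "B = (-2 * G1) *\<^sub>R (mat 1 - P)"
  have "symmetric_mat P"
    unfolding P_def by (intro symmetric_mat_scaleR symmetric_outer_prod)
  then have sym: "symmetric_mat A" "symmetric_mat B"
    unfolding A_def B_def by (blast intro: symmetric_mat_scaleR symmetric_mat_diff symmetric_mat_1)+
  have "psd_mat A"
    unfolding A_def P_def using radial by (intro psd_mat_scaleR psd_outer_prod) auto
  moreover have "psd_mat B"
    unfolding B_def P_def using G1 y by (intro psd_mat_scaleR psd_mat_1_minus_projection) auto
  ultimately have psd: "psd_mat A" "psd_mat B" .
  have "trace P = 1"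
    using y by (simp add: P_def trace_scaleR trace_outer_prod)
  then have trace: "trace A = 2 * G1 + 4 * G2 * (norm y)\<^sup>2"
    "trace B = -2 * G1 * (real CARD('n) - 1)"
    unfolding A_def B_def trace_scaleR trace_sub trace_I by simp_all
  have "A - B = (2 * G1) *\<^sub>R mat 1 + (4 * G2) *\<^sub>R outer_prod y"
    using y by (simp add: A_def B_def P_def vec_eq_iff field_simps)
  then have "F x t ((2 * G1) *\<^sub>R y) ((2 * G1) *\<^sub>R mat 1 + (4 * G2) *\<^sub>R outer_prod y)
      \<le> F x t ((2 * G1) *\<^sub>R y) 0 - lam * trace A + Lam * trace B"
    using F_le_Pucci[OF sym psd] by simp
  moreover have "F x t ((2 * G1) *\<^sub>R y) 0 \<le> -2 * G1 * (b x \<bullet> y + g x * norm y) + c x * t"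
    using F_bound[of x t "(2 * G1) *\<^sub>R y"] G1 by (simp add: algebra_simps)
  moreover have "lam * trace A = lam * (2 * G1 + 4 * G2 * (norm y)\<^sup>2)"
    "Lam * trace B = - 2 * (real CARD('n) - 1) * Lam * G1"
    by (simp_all add: trace algebra_simps)
  ultimately show ?thesis by linarith
qed

end

section \<open>The strong minimum principle\<close>

lemma C2_with_exp_barrier:
  fixes m \<mu> \<alpha> \<rho> :: real and z :: "real^'n"
  defines "G \<equiv> \<lambda>s. m + \<mu> * (exp (- \<alpha> * s) - exp (- \<alpha> * \<rho>\<^sup>2))"
    and "G' \<equiv> \<lambda>s. - \<alpha> * \<mu> * exp (- \<alpha> * s)" and "G'' \<equiv> \<lambda>s. \<alpha>\<^sup>2 * \<mu> * exp (- \<alpha> * s)"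
  shows "C2_with (\<lambda>x. G ((norm (x - z))\<^sup>2)) (radial_grad G' z) (radial_hess G' G'' z)"
proof (rule C2_with_radial)
  fix s :: real
  show "(G has_real_derivative G' s) (at s)"
    unfolding G_def G'_def by (auto intro!: derivative_eq_intros)
  show "(G' has_real_derivative G'' s) (at s)"
    unfolding G'_def G''_def by (auto intro!: derivative_eq_intros simp: power2_eq_square)
  show "isCont G'' s"
    unfolding G''_def by (intro continuous_intros)
qed

context uniformly_elliptic
begin

text \<open>The exponent of the Hopf barrier on an annulus \<open>\<rho>/2 \<le> |x - z| \<le> \<rho>\<close> on which
  \<open>|b| + g \<le> C\<close>.\<close>

definition hopf_exponent :: "real \<Rightarrow> real \<Rightarrow> real" where
  "hopf_exponent C \<rho> = (2 * C * \<rho> + 2 * lam + 2 * (real CARD('n) - 1) * Lam + 1) / (lam * \<rho>\<^sup>2)"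

lemma hopf_exponent_scaled:
  "0 < \<rho> \<Longrightarrow>
    hopf_exponent C \<rho> * lam * \<rho>\<^sup>2 = 2 * C * \<rho> + 2 * lam + 2 * (real CARD('n) - 1) * Lam + 1"
  using lam_pos by (simp add: hopf_exponent_def)

lemma hopf_numerator_gt:
  assumes "0 \<le> C" "0 < \<rho>"
  shows "2 * lam < 2 * C * \<rho> + 2 * lam + 2 * (real CARD('n) - 1) * Lam + 1"
proof -
  have "1 \<le> real CARD('n)" by (simp add: Suc_le_eq)
  then have "0 \<le> (real CARD('n) - 1) * Lam"
    using lam_pos lam_le_Lam by simp
  moreover have "0 \<le> C * \<rho>" using assms by simp
  ultimately show ?thesis by linarith
qed

lemma hopf_exponent_pos:
  assumes "0 \<le> C" "0 < \<rho>"
  shows "0 < hopf_exponent C \<rho>"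
  unfolding hopf_exponent_def
  using hopf_numerator_gt[OF assms] lam_pos assms(2) by (intro divide_pos_pos) simp_all

lemma F_exp_barrier_le:
  fixes \<alpha> \<mu> t :: real and x z :: "real^'n"
  defines "G' \<equiv> \<lambda>s. - \<alpha> * \<mu> * exp (- \<alpha> * s)" and "G'' \<equiv> \<lambda>s. \<alpha>\<^sup>2 * \<mu> * exp (- \<alpha> * s)"
    and "r \<equiv> norm (x - z)"
  assumes \<alpha>: "0 < \<alpha>" and \<mu>: "0 < \<mu>" and x: "x \<noteq> z" and r: "1 \<le> 2 * \<alpha> * r\<^sup>2"
  shows "F x t (radial_grad G' z x) (radial_hess G' G'' z x)
    \<le> \<alpha> * \<mu> * exp (- \<alpha> * r\<^sup>2) * (2 * (b x \<bullet> (x - z) + g x * r) + 2 * lam - 4 * \<alpha> * lam * r\<^sup>2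
        + 2 * (real CARD('n) - 1) * Lam) + c x * t"
proof -
  define E where "E = exp (- \<alpha> * r\<^sup>2)"
  have "0 < \<alpha> * \<mu> * E" using \<alpha> \<mu> by (simp add: E_def)
  have "2 * G' (r\<^sup>2) + 4 * G'' (r\<^sup>2) * r\<^sup>2 = 2 * (\<alpha> * \<mu> * E) * (2 * \<alpha> * r\<^sup>2 - 1)"
    by (simp add: G'_def G''_def E_def algebra_simps power2_eq_square)
  then have radial: "0 \<le> 2 * G' (r\<^sup>2) + 4 * G'' (r\<^sup>2) * r\<^sup>2"
    using \<open>0 < \<alpha> * \<mu> * E\<close> r by simp
  have "G' (r\<^sup>2) \<le> 0" using \<alpha> \<mu> by (simp add: G'_def)
  have "x - z \<noteq> 0" using x by simp
  then have "F x t (radial_grad G' z x) (radial_hess G' G'' z x)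
      \<le> -2 * G' (r\<^sup>2) * (b x \<bullet> (x - z) + g x * r) + c x * t
         - lam * (2 * G' (r\<^sup>2) + 4 * G'' (r\<^sup>2) * r\<^sup>2) - 2 * (real CARD('n) - 1) * Lam * G' (r\<^sup>2)"
    using F_radial_le[OF _ \<open>G' (r\<^sup>2) \<le> 0\<close>[unfolded r_def] radial[unfolded r_def]]
    by (simp add: radial_grad_def radial_hess_def r_def)
  also have "\<dots> = \<alpha> * \<mu> * E * (2 * (b x \<bullet> (x - z) + g x * r) + 2 * lam - 4 * \<alpha> * lam * r\<^sup>2
      + 2 * (real CARD('n) - 1) * Lam) + c x * t"
    by (simp add: G'_def G''_def E_def algebra_simps power2_eq_square)
  finally show ?thesis by (simp add: E_def)
qed

lemma exp_barrier_strict_subsolution: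
  fixes C \<mu> \<rho> t :: real and x z :: "real^'n"
  defines "\<alpha> \<equiv> hopf_exponent C \<rho>"
  defines "G' \<equiv> \<lambda>s. - \<alpha> * \<mu> * exp (- \<alpha> * s)" and "G'' \<equiv> \<lambda>s. \<alpha>\<^sup>2 * \<mu> * exp (- \<alpha> * s)"
  assumes "0 < \<mu>" "0 < \<rho>" "0 \<le> C"
    and bound: "norm (b x) + g x \<le> C"
    and x: "\<rho> / 2 \<le> dist z x" "dist z x \<le> \<rho>"
    and "c x * t \<le> 0"
  shows "F x t (radial_grad G' z x) (radial_hess G' G'' z x) < 0"
proof -
  define r where "r = norm (x - z)"
  have r: "r = dist z x" by (simp add: r_def dist_norm norm_minus_commute)
  have "0 < \<alpha>"
    using hopf_exponent_pos[OF \<open>0 \<le> C\<close> \<open>0 < \<rho>\<close>] by (simp add: \<alpha>_def)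
  have K: "\<alpha> * lam * \<rho>\<^sup>2 = 2 * C * \<rho> + 2 * lam + 2 * (real CARD('n) - 1) * Lam + 1"
    using hopf_exponent_scaled[OF \<open>0 < \<rho>\<close>] by (simp add: \<alpha>_def)
  have "\<rho>\<^sup>2 \<le> 4 * r\<^sup>2"
    using power_mono[of "\<rho> / 2" r 2] x \<open>0 < \<rho>\<close> by (simp add: r power_divide)
  then have gain: "\<alpha> * lam * \<rho>\<^sup>2 \<le> 4 * \<alpha> * lam * r\<^sup>2"
    using mult_left_mono[of "\<rho>\<^sup>2" "4 * r\<^sup>2" "\<alpha> * lam"] \<open>0 < \<alpha>\<close> lam_pos by simp
  have "2 * lam * 1 < 2 * lam * (2 * \<alpha> * r\<^sup>2)"
    using gain K hopf_numerator_gt[OF \<open>0 \<le> C\<close> \<open>0 < \<rho>\<close>] by (simp add: algebra_simps)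
  then have "1 \<le> 2 * \<alpha> * r\<^sup>2"
    using lam_pos by simp
  have "b x \<bullet> (x - z) + g x * r \<le> (norm (b x) + g x) * r"
    using norm_cauchy_schwarz[of "b x" "x - z"] by (simp add: r_def algebra_simps)
  also have "\<dots> \<le> C * \<rho>"
    using bound x r g_nonneg[of x] \<open>0 \<le> C\<close> by (intro mult_mono) auto
  finally have "b x \<bullet> (x - z) + g x * r \<le> C * \<rho>" .
  then have bracket: "2 * (b x \<bullet> (x - z) + g x * r) + 2 * lam - 4 * \<alpha> * lam * r\<^sup>2
      + 2 * (real CARD('n) - 1) * Lam < 0"
    using gain K by argo
  have "0 < \<alpha> * \<mu> * exp (- \<alpha> * r\<^sup>2)" using \<open>0 < \<alpha>\<close> \<open>0 < \<mu>\<close> by simp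
  note negative = mult_pos_neg[OF this bracket]
  have "x \<noteq> z" using x \<open>0 < \<rho>\<close> by auto
  note le = F_exp_barrier_le[where t = t, OF \<open>0 < \<alpha>\<close> \<open>0 < \<mu>\<close> this, folded r_def]
  show ?thesis
    unfolding G'_def G''_def
    using le[OF \<open>1 \<le> 2 * \<alpha> * r\<^sup>2\<close>] negative \<open>c x * t \<le> 0\<close> by linarith
qed

lemma exp_barrier_below:
  fixes v :: "real^'n \<Rightarrow> real" and m \<mu> \<rho> C :: real and z x :: "real^'n"
  defines "\<alpha> \<equiv> hopf_exponent C \<rho>"
  defines "G \<equiv> \<lambda>s. m + \<mu> * (exp (- \<alpha> * s) - exp (- \<alpha> * \<rho>\<^sup>2))"
  assumes super: "viscosity_supersolution F v" and cv: "\<And>x. c x * v x \<le> 0"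
    and "0 < \<mu>" "0 < \<rho>" "0 \<le> C"
    and bound: "\<And>x. dist z x \<le> \<rho> \<Longrightarrow> norm (b x) + g x \<le> C"
    and m: "\<And>x. m \<le> v x" and inner: "\<And>x. dist z x = \<rho> / 2 \<Longrightarrow> m + \<mu> \<le> v x"
    and x: "\<rho> / 2 \<le> dist z x"
  shows "G ((norm (x - z))\<^sup>2) \<le> v x"
proof -
  define G' where "G' = (\<lambda>s. - \<alpha> * \<mu> * exp (- \<alpha> * s))"
  define G'' where "G'' = (\<lambda>s. \<alpha>\<^sup>2 * \<mu> * exp (- \<alpha> * s))"
  define \<phi> where "\<phi> = (\<lambda>x. G ((norm (x - z))\<^sup>2))"
  have "0 < \<alpha>"
    using hopf_exponent_pos[OF \<open>0 \<le> C\<close> \<open>0 < \<rho>\<close>] by (simp add: \<alpha>_def)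
  have C2: "C2_with \<phi> (radial_grad G' z) (radial_hess G' G'' z)"
    unfolding \<phi>_def G_def G'_def G''_def by (rule C2_with_exp_barrier)
  have \<phi>_le_m: "\<phi> y \<le> m" if "\<rho> \<le> dist z y" for y
  proof -
    have "\<rho>\<^sup>2 \<le> (norm (y - z))\<^sup>2"
      using that \<open>0 < \<rho>\<close> by (intro power_mono) (auto simp: dist_norm norm_minus_commute)
    then show ?thesis
      using \<open>0 < \<alpha>\<close> \<open>0 < \<mu>\<close> by (simp add: \<phi>_def G_def mult_le_0_iff)
  qed
  have \<phi>_less: "\<phi> y < m + \<mu>" for y
  proof -
    have "exp (- \<alpha> * (norm (y - z))\<^sup>2) \<le> 1" using \<open>0 < \<alpha>\<close> by simp
    moreover have "0 < exp (- \<alpha> * \<rho>\<^sup>2)" by simp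
    ultimately have "exp (- \<alpha> * (norm (y - z))\<^sup>2) - exp (- \<alpha> * \<rho>\<^sup>2) < 1" by linarith
    then have "\<mu> * (exp (- \<alpha> * (norm (y - z))\<^sup>2) - exp (- \<alpha> * \<rho>\<^sup>2)) < \<mu> * 1"
      using \<open>0 < \<mu>\<close> by (rule mult_strict_left_mono)
    then show ?thesis by (simp add: \<phi>_def G_def)
  qed
  have "\<phi> x \<le> v x"
  proof (cases "dist z x \<le> \<rho>")
    case True
    show ?thesis
    proof (rule supersolution_ge_strict_subsolution_annulus[OF super C2 _ _ x True])
      show "\<phi> y \<le> v y" if "dist z y = \<rho> / 2 \<or> dist z y = \<rho>" for y
        using that \<phi>_less[of y] inner[of y] \<phi>_le_m[of y] m[of y] by auto
      show "F y (v y) (radial_grad G' z y) (radial_hess G' G'' z y) < 0"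
        if "\<rho> / 2 < dist z y" "dist z y < \<rho>" for y
        unfolding G'_def G''_def \<alpha>_def
        using that by (intro exp_barrier_strict_subsolution \<open>0 < \<mu>\<close> \<open>0 < \<rho>\<close> \<open>0 \<le> C\<close> bound cv) auto
    qed
  next
    case False
    then show ?thesis using \<phi>_le_m[of x] m[of x] by simp
  qed
  then show ?thesis by (simp add: \<phi>_def)
qed

lemma strong_minimum_principle:
  fixes v :: "real^'n \<Rightarrow> real"
  assumes super: "viscosity_supersolution F v"
    and b_cont: "continuous_on UNIV b" and g_cont: "continuous_on UNIV g"
    and cv: "\<And>x. c x * v x \<le> 0"
    and min: "\<And>y. v x\<^sub>1 \<le> v y"
  shows "v z = v x\<^sub>1"
proof (rule ccontr)
  assume "v z \<noteq> v x\<^sub>1"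
  define m where "m = v x\<^sub>1"
  have m: "m \<le> v y" for y using min by (simp add: m_def)
  have "m < v z" using m[of z] \<open>v z \<noteq> v x\<^sub>1\<close> by (simp add: m_def)
  then obtain x\<^sub>s where "v x\<^sub>s \<le> m" "0 < dist z x\<^sub>s"
    and above: "\<And>y. dist z y < dist z x\<^sub>s \<Longrightarrow> m < v y"
    using lsc_nearest_sublevel_point[OF viscosity_supersolution_lsc[OF super], of x\<^sub>1 m]
    by (auto simp: m_def)
  then have x\<^sub>s: "v x\<^sub>s = m" using m[of x\<^sub>s] by simp
  define \<rho> where "\<rho> = dist z x\<^sub>s"
  have "0 < \<rho>" using \<open>0 < dist z x\<^sub>s\<close> by (simp add: \<rho>_def)
  then have "sphere z (\<rho> / 2) \<noteq> {}" by simp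
  then obtain q where q: "q \<in> sphere z (\<rho> / 2)" and q_min: "\<And>y. y \<in> sphere z (\<rho> / 2) \<Longrightarrow> v q \<le> v y"
    by (rule lsc_attains_min[OF viscosity_supersolution_lsc[OF super] compact_sphere]) blast
  define \<mu> where "\<mu> = v q - m"
  have "dist z q < \<rho>" using q \<open>0 < \<rho>\<close> by simp
  then have "dist z q < dist z x\<^sub>s" by (simp add: \<rho>_def)
  then have "0 < \<mu>" using above by (simp add: \<mu>_def)
  have "continuous_on (cball z \<rho>) (\<lambda>x. norm (b x) + g x)"
    using continuous_on_subset[OF b_cont] continuous_on_subset[OF g_cont]
    by (intro continuous_on_add continuous_on_norm) auto
  then have "bounded ((\<lambda>x. norm (b x) + g x) ` cball z \<rho>)"
    using compact_continuous_image compact_cball compact_imp_bounded by blast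
  then obtain C where "0 < C" and C_bound: "\<forall>u\<in>(\<lambda>x. norm (b x) + g x) ` cball z \<rho>. norm u \<le> C"
    unfolding bounded_pos by blast
  have C: "norm (b x) + g x \<le> C" if "dist z x \<le> \<rho>" for x
    using C_bound[rule_format, OF imageI[of x "cball z \<rho>"]] that by simp
  define \<alpha> where "\<alpha> = hopf_exponent C \<rho>"
  define G where "G = (\<lambda>s. m + \<mu> * (exp (- \<alpha> * s) - exp (- \<alpha> * \<rho>\<^sup>2)))"
  define G' where "G' = (\<lambda>s. - \<alpha> * \<mu> * exp (- \<alpha> * s))"
  define G'' where "G'' = (\<lambda>s. \<alpha>\<^sup>2 * \<mu> * exp (- \<alpha> * s))"
  define \<phi> where "\<phi> = (\<lambda>x. G ((norm (x - z))\<^sup>2))"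
  have below: "\<phi> y \<le> v y" if "\<rho> / 2 \<le> dist z y" for y
    unfolding \<phi>_def G_def \<alpha>_def
  proof (rule exp_barrier_below[OF super cv \<open>0 < \<mu>\<close> \<open>0 < \<rho>\<close> less_imp_le[OF \<open>0 < C\<close>] C m _ that])
    show "m + \<mu> \<le> v y" if "dist z y = \<rho> / 2" for y
      using q_min[of y] that by (simp add: \<mu>_def)
  qed
  text \<open>\<open>\<phi>\<close> touches \<open>v\<close> from below at \<open>x\<^sub>s\<close>, where it is a strict subsolution.\<close>
  have "v x\<^sub>s - \<phi> x\<^sub>s \<le> v y - \<phi> y" if "y \<in> ball x\<^sub>s (\<rho> / 2)" for y
  proof -
    have "\<rho> / 2 \<le> dist z y"
      using that dist_triangle[of z x\<^sub>s y] dist_commute[of y x\<^sub>s] by (simp add: \<rho>_def)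
    moreover have "\<phi> x\<^sub>s = v x\<^sub>s"
      by (simp add: \<phi>_def G_def x\<^sub>s \<rho>_def dist_norm norm_minus_commute)
    ultimately show ?thesis
      using below[of y] by simp
  qed
  moreover have "C2_with \<phi> (radial_grad G' z) (radial_hess G' G'' z)"
    unfolding \<phi>_def G_def G'_def G''_def by (rule C2_with_exp_barrier)
  ultimately have "0 \<le> F x\<^sub>s (v x\<^sub>s) (radial_grad G' z x\<^sub>s) (radial_hess G' G'' z x\<^sub>s)"
    using \<open>0 < \<rho>\<close> by (intro viscosity_supersolutionD[OF super, of _ _ _ "\<rho> / 2"]) auto
  moreover have "F x\<^sub>s (v x\<^sub>s) (radial_grad G' z x\<^sub>s) (radial_hess G' G'' z x\<^sub>s) < 0"
    unfolding G'_def G''_def \<alpha>_def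
    using \<open>0 < \<rho>\<close> C[of x\<^sub>s]
    by (intro exp_barrier_strict_subsolution \<open>0 < \<mu>\<close> \<open>0 < C\<close>[THEN less_imp_le] cv)
      (auto simp: \<rho>_def)
  ultimately show False by simp
qed

end

section \<open>The minimum is attained\<close>

lemma ln_ge_1: "3 \<le> x \<Longrightarrow> 1 \<le> ln (x :: real)"
  using exp_le by (subst ln_ge_iff) auto

lemma liminf_log_sphere_bound:
  fixes v :: "'a::real_normed_vector \<Rightarrow> real" and a K R\<^sub>0 :: real
  assumes liminf: "\<forall>\<epsilon>>0. \<exists>R. \<forall>x. norm x \<ge> R \<longrightarrow> v x / ln (norm x) \<ge> - \<epsilon>" and a: "0 < a"
  obtains R where "R\<^sub>0 \<le> R" "K \<le> a / 2 * ln R" "\<And>y. norm y = R \<Longrightarrow> - (a / 2) * ln R \<le> v y"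
proof -
  obtain R' where R': "\<And>x. R' \<le> norm x \<Longrightarrow> - (a / 2) \<le> v x / ln (norm x)"
    using liminf a by (meson half_gt_zero)
  define R where "R = Max {R', R\<^sub>0, exp (2 * \<bar>K\<bar> / a), 3}"
  have R: "R' \<le> R" "R\<^sub>0 \<le> R" "exp (2 * \<bar>K\<bar> / a) \<le> R" "3 \<le> R"
    by (simp_all add: R_def)
  then have "2 * \<bar>K\<bar> / a \<le> ln R" by (subst ln_ge_iff) auto
  from mult_left_mono[OF this, of "a / 2"]
  have "\<bar>K\<bar> \<le> a / 2 * ln R" using a by simp
  then have "K \<le> a / 2 * ln R" using abs_ge_self[of K] by linarith
  moreover have "0 < ln R" using ln_ge_1[OF R(4)] by simp
  then have "- (a / 2) * ln R \<le> v y" if "norm y = R" for y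
    using R'[of y] R(1) that by (simp add: pos_le_divide_eq)
  ultimately show thesis using that R(2) by blast
qed

text \<open>The last estimate absorbs the term \<open>c x |x|\<^sup>2 ln |x|\<close> of the growth condition.\<close>

lemma log_barrier_profile:
  fixes a \<beta> \<sigma> s :: real
  defines "G' \<equiv> \<lambda>s. - (a / 2) * inverse (s + \<sigma>) + \<beta> / 2"
    and "G'' \<equiv> \<lambda>s. (a / 2) * inverse ((s + \<sigma>)\<^sup>2)"
  assumes a: "0 < a" and \<sigma>: "0 < \<sigma>" "\<sigma> \<le> 1" and \<beta>: "2 * a * \<sigma> = \<beta>"
    and s: "\<beta> * (s + \<sigma>) \<le> a" "9 \<le> s"
  shows "G' s \<le> 0" and "0 \<le> 2 * G' s + 4 * G'' s * s" and "0 < 4 * G' s + 4 * G'' s * s"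
    and "- (a / 2) * ln (s + \<sigma>) + \<beta> * s / 2 - 2 * G' s * s * (ln s / 2) \<le> 0"
proof -
  define q where "q = s + \<sigma>"
  have "1 \<le> q" "s = q - \<sigma>" using s(2) \<sigma>(1) by (simp_all add: q_def)
  have G'_s: "G' s = - (a / 2) / q + \<beta> / 2" and G''_s: "G'' s = (a / 2) / q\<^sup>2"
    by (simp_all add: G'_def G''_def q_def inverse_eq_divide)
  have "0 < \<beta>" using a \<sigma>(1) \<beta> by auto
  show "G' s \<le> 0"
    using s(1) \<open>1 \<le> q\<close> by (simp add: G'_s q_def field_simps)
  have "2 * G' s + 4 * G'' s * s = \<beta> + a * (q - 2 * \<sigma>) / q\<^sup>2"
    unfolding G'_s G''_s using \<open>1 \<le> q\<close> by (simp add: \<open>s = q - \<sigma>\<close> field_simps power2_eq_square)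
  moreover have "0 \<le> a * (q - 2 * \<sigma>) / q\<^sup>2"
    using a \<open>s = q - \<sigma>\<close> s(2) \<sigma>(2) by simp
  ultimately show "0 \<le> 2 * G' s + 4 * G'' s * s"
    using \<open>0 < \<beta>\<close> by linarith
  text \<open>The relation \<open>\<beta> = 2 a \<sigma>\<close> lets the quadratic term outweigh the negative radial curvature
    \<open>-2 a \<sigma> / (s + \<sigma>)\<^sup>2\<close> of the logarithm.\<close>
  have "4 * G' s + 4 * G'' s * s = 2 * \<beta> - 2 * a * \<sigma> / q\<^sup>2"
    unfolding G'_s G''_s using \<open>1 \<le> q\<close> by (simp add: \<open>s = q - \<sigma>\<close> field_simps power2_eq_square)
  moreover have "a * \<sigma> / q\<^sup>2 \<le> a * \<sigma>"
  proof -
    have "1 \<le> q\<^sup>2" using \<open>1 \<le> q\<close> by (simp add: one_le_power)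
    then show ?thesis
      using mult_pos_pos[OF a \<sigma>(1)] by (simp add: divide_le_eq_1 divide_le_eq mult_le_cancel_left1)
  qed
  ultimately show "0 < 4 * G' s + 4 * G'' s * s"
    using \<beta> \<open>0 < \<beta>\<close> by linarith
  have "1 \<le> ln s" using s(2) by (intro ln_ge_1) simp
  have "a * s / q * (ln s / 2) \<le> a / 2 * ln s"
    using a \<open>1 \<le> ln s\<close> \<open>1 \<le> q\<close> s(2) \<sigma>(1)
    by (simp add: q_def divide_le_eq mult_le_cancel_left1 mult.commute)
  also have "\<dots> \<le> a / 2 * ln (s + \<sigma>)"
    using a s(2) \<sigma>(1) by (intro mult_left_mono ln_mono) auto
  finally have "a * s / q * (ln s / 2) \<le> a / 2 * ln (s + \<sigma>)" .
  moreover have "\<beta> * s * (1 / 2 - ln s / 2) \<le> 0"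
    using \<open>0 < \<beta>\<close> s(2) \<open>1 \<le> ln s\<close> by (intro mult_nonneg_nonpos) auto
  moreover have "- (a / 2) * ln (s + \<sigma>) + \<beta> * s / 2 - 2 * G' s * s * (ln s / 2)
      = - (a / 2) * ln (s + \<sigma>) + a * s / q * (ln s / 2) + \<beta> * s * (1 / 2 - ln s / 2)"
    using \<open>1 \<le> q\<close> by (simp add: G'_s field_simps)
  ultimately show "- (a / 2) * ln (s + \<sigma>) + \<beta> * s / 2 - 2 * G' s * s * (ln s / 2) \<le> 0"
    by linarith
qed

lemma log_barrier_on_spheres:
  fixes a M R\<^sub>1 R\<^sub>2 :: real
  defines "\<beta> \<equiv> a / (R\<^sub>2\<^sup>2 + 1)" and "\<sigma> \<equiv> 1 / (2 * (R\<^sub>2\<^sup>2 + 1))"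
  assumes a: "0 < a" and R: "3 \<le> R\<^sub>1" "R\<^sub>1 \<le> R\<^sub>2" and far: "\<bar>M\<bar> + a / 2 \<le> a / 2 * ln R\<^sub>2"
  shows "M - a / 2 * ln (R\<^sub>1\<^sup>2 + \<sigma>) + \<beta> * R\<^sub>1\<^sup>2 / 2 \<le> M"
    and "M - a / 2 * ln (R\<^sub>2\<^sup>2 + \<sigma>) + \<beta> * R\<^sub>2\<^sup>2 / 2 \<le> - (a / 2) * ln R\<^sub>2"
proof -
  define D where "D = R\<^sub>2\<^sup>2 + 1"
  have \<beta>_D: "\<beta> = a / D" and \<sigma>_D: "\<sigma> = 1 / (2 * D)" by (simp_all add: \<beta>_def \<sigma>_def D_def)
  have "1 \<le> D" by (simp add: D_def)
  then have "0 < \<beta>" "\<beta> * D = a" "0 < \<sigma>"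
    unfolding \<beta>_D \<sigma>_D using a by (simp_all add: field_simps)
  then have "\<beta> * R\<^sub>2\<^sup>2 + \<beta> = a" by (simp add: D_def algebra_simps)
  have "9 \<le> R\<^sub>1\<^sup>2" using power_mono[of 3 R\<^sub>1 2] R by simp
  have "\<beta> * R\<^sub>1\<^sup>2 \<le> \<beta> * R\<^sub>2\<^sup>2"
    using R \<open>0 < \<beta>\<close> by (intro mult_left_mono power_mono) auto
  have "1 \<le> ln (R\<^sub>1\<^sup>2 + \<sigma>)"
    using \<open>9 \<le> R\<^sub>1\<^sup>2\<close> \<open>0 < \<sigma>\<close> by (intro ln_ge_1) simp
  from mult_left_mono[OF this, of "a / 2"]
  have "a / 2 \<le> a / 2 * ln (R\<^sub>1\<^sup>2 + \<sigma>)" using a by simp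
  then show "M - a / 2 * ln (R\<^sub>1\<^sup>2 + \<sigma>) + \<beta> * R\<^sub>1\<^sup>2 / 2 \<le> M"
    using \<open>\<beta> * R\<^sub>1\<^sup>2 \<le> \<beta> * R\<^sub>2\<^sup>2\<close> \<open>\<beta> * R\<^sub>2\<^sup>2 + \<beta> = a\<close> \<open>0 < \<beta>\<close> by linarith
  have "0 < R\<^sub>2" using R by simp
  then have "2 * ln R\<^sub>2 \<le> ln (R\<^sub>2\<^sup>2 + \<sigma>)"
    using \<open>0 < \<sigma>\<close> ln_mono[of "R\<^sub>2\<^sup>2" "R\<^sub>2\<^sup>2 + \<sigma>"] by (simp add: ln_realpow)
  from mult_left_mono[OF this, of "a / 2"]
  have "a * ln R\<^sub>2 \<le> a / 2 * ln (R\<^sub>2\<^sup>2 + \<sigma>)"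
    using a by simp
  then show "M - a / 2 * ln (R\<^sub>2\<^sup>2 + \<sigma>) + \<beta> * R\<^sub>2\<^sup>2 / 2 \<le> - (a / 2) * ln R\<^sub>2"
    using far \<open>\<beta> * R\<^sub>2\<^sup>2 + \<beta> = a\<close> \<open>0 < \<beta>\<close> abs_ge_self[of M] by linarith
qed

lemma C2_with_log_barrier:
  fixes M a \<beta> \<sigma> :: real and z :: "real^'n"
  defines "G \<equiv> \<lambda>s. M - (a / 2) * ln (s + \<sigma>) + \<beta> * s / 2"
    and "G' \<equiv> \<lambda>s. - (a / 2) * inverse (s + \<sigma>) + \<beta> / 2"
    and "G'' \<equiv> \<lambda>s. (a / 2) * inverse ((s + \<sigma>)\<^sup>2)"
  assumes "0 < \<sigma>"
  shows "C2_with (\<lambda>x. G ((norm (x - z))\<^sup>2)) (radial_grad G' z) (radial_hess G' G'' z)"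
proof (rule C2_with_radial)
  fix s :: real assume "0 \<le> s"
  then have "0 < s + \<sigma>" using \<open>0 < \<sigma>\<close> by linarith
  then show "(G has_real_derivative G' s) (at s)"
    unfolding G_def G'_def by (auto intro!: derivative_eq_intros simp: field_simps)
  show "(G' has_real_derivative G'' s) (at s)"
    using \<open>0 < s + \<sigma>\<close> unfolding G'_def G''_def
    by (auto intro!: derivative_eq_intros simp: power2_eq_square)
  show "isCont G'' s"
    using \<open>0 < s + \<sigma>\<close> unfolding G''_def by (intro continuous_intros) auto
qed

context uniformly_elliptic
begin

lemma log_barrier_strict_subsolution:
  fixes a \<beta> \<sigma> M t :: real and x :: "real^'n"
  defines "G \<equiv> \<lambda>s. M - (a / 2) * ln (s + \<sigma>) + \<beta> * s / 2"
    and "G' \<equiv> \<lambda>s. - (a / 2) * inverse (s + \<sigma>) + \<beta> / 2"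
    and "G'' \<equiv> \<lambda>s. (a / 2) * inverse ((s + \<sigma>)\<^sup>2)"
  assumes a: "0 < a" and \<sigma>: "0 < \<sigma>" "\<sigma> \<le> 1" and \<beta>: "2 * a * \<sigma> = \<beta>"
    and x: "3 \<le> norm x" "\<beta> * ((norm x)\<^sup>2 + \<sigma>) \<le> a"
    and growth: "b x \<bullet> x + g x * norm x
        \<le> c x * (norm x)\<^sup>2 * ln (norm x) + lam - (real CARD('n) - 1) * Lam"
    and "0 \<le> c x" and M: "c x \<noteq> 0 \<Longrightarrow> M \<le> 0" and "t < G ((norm x)\<^sup>2)"
  shows "F x t (radial_grad G' 0 x) (radial_hess G' G'' 0 x) < 0"
proof -
  define s where "s = (norm x)\<^sup>2"
  have "9 \<le> s"
    using power_mono[of 3 "norm x" 2] x by (simp add: s_def)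
  have profile: "G' s \<le> 0" "0 \<le> 2 * G' s + 4 * G'' s * s" "0 < 4 * G' s + 4 * G'' s * s"
      "- (a / 2) * ln (s + \<sigma>) + \<beta> * s / 2 - 2 * G' s * s * (ln s / 2) \<le> 0"
    unfolding G'_def G''_def
    using log_barrier_profile[OF a \<sigma> \<beta> x(2)[folded s_def] \<open>9 \<le> s\<close>] by simp_all
  have ln_s: "ln (norm x) = ln s / 2"
    using x by (simp add: s_def ln_realpow)
  have "x \<noteq> 0" using x by auto
  then have "F x t (radial_grad G' 0 x) (radial_hess G' G'' 0 x)
      \<le> -2 * G' s * (b x \<bullet> x + g x * norm x) + c x * t - lam * (2 * G' s + 4 * G'' s * s)
         - 2 * (real CARD('n) - 1) * Lam * G' s"
    using F_radial_le[OF \<open>x \<noteq> 0\<close> profile(1), of "G'' s" x t] profile(2)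
    by (simp add: radial_grad_def radial_hess_def s_def)
  also have "\<dots> \<le> -2 * G' s * (c x * s * ln (norm x) + lam - (real CARD('n) - 1) * Lam)
      + c x * t - lam * (2 * G' s + 4 * G'' s * s) - 2 * (real CARD('n) - 1) * Lam * G' s"
    using mult_left_mono[OF growth, of "-2 * G' s"] profile(1) by (simp add: s_def)
  also have "\<dots> = c x * (t - 2 * G' s * s * ln (norm x)) - lam * (4 * G' s + 4 * G'' s * s)"
    by (simp add: algebra_simps)
  also have "\<dots> < 0"
  proof -
    have "c x * (t - 2 * G' s * s * ln (norm x)) \<le> 0"
    proof (cases "c x = 0")
      case False
      have "t - 2 * G' s * s * ln (norm x) < M"
        using \<open>t < G ((norm x)\<^sup>2)\<close> profile(4) by (simp add: G_def s_def ln_s)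
      then show ?thesis
        using M[OF False] \<open>0 \<le> c x\<close> by (simp add: mult_nonneg_nonpos)
    qed simp
    then show ?thesis using mult_pos_pos[OF lam_pos profile(3)] by linarith
  qed
  finally show ?thesis .
qed

lemma log_barrier_below:
  fixes v :: "real^'n \<Rightarrow> real" and a M R\<^sub>1 R\<^sub>2 :: real and x :: "real^'n"
  defines "\<beta> \<equiv> a / (R\<^sub>2\<^sup>2 + 1)" and "\<sigma> \<equiv> 1 / (2 * (R\<^sub>2\<^sup>2 + 1))"
  assumes super: "viscosity_supersolution F v"
    and c_nonneg: "\<And>x. 0 \<le> c x" and M: "\<And>x. c x \<noteq> 0 \<Longrightarrow> M \<le> 0"
    and growth: "\<And>x. R\<^sub>1 \<le> norm x \<Longrightarrow>
        b x \<bullet> x + g x * norm x \<le> c x * (norm x)\<^sup>2 * ln (norm x) + lam - (real CARD('n) - 1) * Lam"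
    and R: "0 < a" "3 \<le> R\<^sub>1" "R\<^sub>1 \<le> R\<^sub>2" and far: "\<bar>M\<bar> + a / 2 \<le> a / 2 * ln R\<^sub>2"
    and inner: "\<And>y. norm y = R\<^sub>1 \<Longrightarrow> M \<le> v y"
    and outer: "\<And>y. norm y = R\<^sub>2 \<Longrightarrow> - (a / 2) * ln R\<^sub>2 \<le> v y"
    and x: "R\<^sub>1 \<le> norm x" "norm x \<le> R\<^sub>2"
  shows "M - a / 2 * ln ((norm x)\<^sup>2 + \<sigma>) + \<beta> * (norm x)\<^sup>2 / 2 \<le> v x"
proof -
  define D where "D = R\<^sub>2\<^sup>2 + 1"
  have \<beta>_D: "\<beta> = a / D" and \<sigma>_D: "\<sigma> = 1 / (2 * D)" by (simp_all add: \<beta>_def \<sigma>_def D_def)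
  have "1 \<le> D" by (simp add: D_def)
  then have "0 < \<beta>" "\<beta> * D = a" "0 < \<sigma>" "\<sigma> \<le> 1" "2 * a * \<sigma> = \<beta>"
    unfolding \<beta>_D \<sigma>_D using R(1) by (simp_all add: field_simps)
  have \<beta>_le: "\<beta> * (r\<^sup>2 + \<sigma>) \<le> a" if "0 \<le> r" "r \<le> R\<^sub>2" for r
  proof -
    have "r\<^sup>2 + \<sigma> \<le> D"
      using power_mono[OF that(2,1), of 2] \<open>\<sigma> \<le> 1\<close> by (simp add: D_def)
    then show ?thesis
      using mult_left_mono[of _ D \<beta>] \<open>0 < \<beta>\<close> \<open>\<beta> * D = a\<close> by simp
  qed
  define G where "G = (\<lambda>s. M - (a / 2) * ln (s + \<sigma>) + \<beta> * s / 2)"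
  define G' where "G' = (\<lambda>s. - (a / 2) * inverse (s + \<sigma>) + \<beta> / 2)"
  define G'' where "G'' = (\<lambda>s. (a / 2) * inverse ((s + \<sigma>)\<^sup>2))"
  define \<phi> where "\<phi> = (\<lambda>x::real^'n. G ((norm (x - 0))\<^sup>2))"
  have C2: "C2_with \<phi> (radial_grad G' 0) (radial_hess G' G'' 0)"
    unfolding \<phi>_def G_def G'_def G''_def using \<open>0 < \<sigma>\<close> by (rule C2_with_log_barrier)
  have \<phi>: "\<phi> y = M - a / 2 * ln ((norm y)\<^sup>2 + \<sigma>) + \<beta> * (norm y)\<^sup>2 / 2" for y
    by (simp add: \<phi>_def G_def)
  note spheres = log_barrier_on_spheres[OF R far, folded \<beta>_def \<sigma>_def]
  have "\<phi> x \<le> v x"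
  proof (rule supersolution_ge_strict_subsolution_annulus[OF super C2])
    show "\<phi> y \<le> v y" if "dist 0 y = R\<^sub>1 \<or> dist 0 y = R\<^sub>2" for y
      using that spheres inner[of y] outer[of y] by (auto simp: \<phi>)
    show "F y (v y) (radial_grad G' 0 y) (radial_hess G' G'' 0 y) < 0"
      if y: "R\<^sub>1 < dist 0 y" "dist 0 y < R\<^sub>2" "v y < \<phi> y" for y
      unfolding G'_def G''_def
    proof (rule log_barrier_strict_subsolution[OF R(1) \<open>0 < \<sigma>\<close> \<open>\<sigma> \<le> 1\<close> \<open>2 * a * \<sigma> = \<beta>\<close>])
      show "3 \<le> norm y" using y(1) R(2) by simp
      show "\<beta> * ((norm y)\<^sup>2 + \<sigma>) \<le> a" using \<beta>_le y(2) by simp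
      show "b y \<bullet> y + g y * norm y
          \<le> c y * (norm y)\<^sup>2 * ln (norm y) + lam - (real CARD('n) - 1) * Lam"
        using growth y(1) by simp
      show "v y < M - a / 2 * ln ((norm y)\<^sup>2 + \<sigma>) + \<beta> * (norm y)\<^sup>2 / 2"
        using y(3) by (simp add: \<phi>)
    qed (use c_nonneg M in auto)
  qed (use x in simp_all)
  then show ?thesis by (simp add: \<phi>)
qed

lemma supersolution_attains_min:
  fixes v :: "real^'n \<Rightarrow> real"
  assumes super: "viscosity_supersolution F v"
    and c_nonneg: "\<And>x. 0 \<le> c x"
    and alt: "(\<forall>x. c x = 0) \<or> (\<forall>x. v x \<le> 0)"
    and growth: "\<And>x. R\<^sub>o \<le> norm x \<Longrightarrow>
        b x \<bullet> x + g x * norm x \<le> c x * (norm x)\<^sup>2 * ln (norm x) + lam - (real CARD('n) - 1) * Lam"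
    and liminf: "\<forall>\<epsilon>>0. \<exists>R. \<forall>x. norm x \<ge> R \<longrightarrow> v x / ln (norm x) \<ge> - \<epsilon>"
  obtains x\<^sub>1 where "\<And>y. v x\<^sub>1 \<le> v y"
proof -
  define R\<^sub>1 where "R\<^sub>1 = max R\<^sub>o 3"
  obtain x\<^sub>1 where min_ball: "\<And>y. norm y \<le> R\<^sub>1 \<Longrightarrow> v x\<^sub>1 \<le> v y"
    using lsc_attains_min[OF viscosity_supersolution_lsc[OF super] compact_cball, of 0 R\<^sub>1]
    by (auto simp: R\<^sub>1_def)
  define M where "M = v x\<^sub>1"
  have M: "c x \<noteq> 0 \<Longrightarrow> M \<le> 0" for x using alt by (auto simp: M_def)
  have "M \<le> v x\<^sub>h" for x\<^sub>h
  proof (rule ccontr)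
    assume "\<not> M \<le> v x\<^sub>h"
    then have "R\<^sub>1 < norm x\<^sub>h" using min_ball[of x\<^sub>h] unfolding M_def by (meson not_le)
    define L where "L = ln ((norm x\<^sub>h)\<^sup>2 + 1)"
    have "0 \<le> L" by (simp add: L_def)
    text \<open>The barrier's logarithmic slope \<open>a\<close> is chosen so small that it still lies above \<open>v\<close>
      at \<open>x\<^sub>h\<close>.\<close>
    define a where "a = (M - v x\<^sub>h) / (1 + L)"
    have "0 < a" using \<open>\<not> M \<le> v x\<^sub>h\<close> \<open>0 \<le> L\<close> by (simp add: a_def)
    have "a * (1 + L) = M - v x\<^sub>h"
      using \<open>0 \<le> L\<close> by (simp add: a_def)
    then have a_small: "a * L < M - v x\<^sub>h"
      using \<open>0 < a\<close> by (simp add: algebra_simps)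
    obtain R\<^sub>2 where R\<^sub>2: "max R\<^sub>1 (norm x\<^sub>h) \<le> R\<^sub>2" and far: "\<bar>M\<bar> + a / 2 \<le> a / 2 * ln R\<^sub>2"
      and outer: "\<And>y. norm y = R\<^sub>2 \<Longrightarrow> - (a / 2) * ln R\<^sub>2 \<le> v y"
      by (rule liminf_log_sphere_bound[OF liminf \<open>0 < a\<close>,
            where R\<^sub>0 = "max R\<^sub>1 (norm x\<^sub>h)" and K = "\<bar>M\<bar> + a / 2"]) blast
    have "3 \<le> R\<^sub>1" "R\<^sub>o \<le> R\<^sub>1" "R\<^sub>1 \<le> R\<^sub>2" "norm x\<^sub>h \<le> R\<^sub>2"
      using R\<^sub>2 by (auto simp: R\<^sub>1_def)
    have inner: "M \<le> v y" if "norm y = R\<^sub>1" for y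
      using min_ball[of y] that by (simp add: M_def)
    have growth_R\<^sub>1: "b x \<bullet> x + g x * norm x
        \<le> c x * (norm x)\<^sup>2 * ln (norm x) + lam - (real CARD('n) - 1) * Lam" if "R\<^sub>1 \<le> norm x" for x
      by (intro growth) (use \<open>R\<^sub>o \<le> R\<^sub>1\<close> that in linarith)
    define D where "D = R\<^sub>2\<^sup>2 + 1"
    define \<beta> where "\<beta> = a / D"
    define \<sigma> where "\<sigma> = 1 / (2 * D)"
    have "1 \<le> D" by (simp add: D_def)
    then have "0 \<le> \<beta>" "0 < \<sigma>" "\<sigma> \<le> 1"
      using \<open>0 < a\<close> by (simp_all add: \<beta>_def \<sigma>_def field_simps)
    have below: "M - a / 2 * ln ((norm x\<^sub>h)\<^sup>2 + \<sigma>) + \<beta> * (norm x\<^sub>h)\<^sup>2 / 2 \<le> v x\<^sub>h"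
      using log_barrier_below[OF super c_nonneg M growth_R\<^sub>1 \<open>0 < a\<close> \<open>3 \<le> R\<^sub>1\<close> \<open>R\<^sub>1 \<le> R\<^sub>2\<close> far
          inner outer less_imp_le[OF \<open>R\<^sub>1 < norm x\<^sub>h\<close>] \<open>norm x\<^sub>h \<le> R\<^sub>2\<close>, folded D_def, folded \<beta>_def \<sigma>_def] .
    have "ln ((norm x\<^sub>h)\<^sup>2 + \<sigma>) \<le> L"
      unfolding L_def using \<open>0 < \<sigma>\<close> \<open>\<sigma> \<le> 1\<close> by (intro ln_mono) (auto simp: add_nonneg_pos)
    from mult_left_mono[OF this, of "a / 2"]
    have "a / 2 * ln ((norm x\<^sub>h)\<^sup>2 + \<sigma>) \<le> a / 2 * L"
      using \<open>0 < a\<close> by simp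
    moreover have "a / 2 * L \<le> a * L"
      using mult_nonneg_nonneg[of a L] \<open>0 < a\<close> \<open>0 \<le> L\<close> by linarith
    moreover have "0 \<le> \<beta> * (norm x\<^sub>h)\<^sup>2 / 2" using \<open>0 \<le> \<beta>\<close> by simp
    ultimately show False using below a_small by linarith
  qed
  then show thesis using that unfolding M_def by blast
qed

end

theorem corollary3p4:
  fixes F :: "real^'n \<Rightarrow> real \<Rightarrow> real^'n \<Rightarrow> real^'n^'n \<Rightarrow> real"
    and lam Lam R\<^sub>o :: real
    and b :: "real^'n \<Rightarrow> real^'n"
    and g c :: "real^'n \<Rightarrow> real"
    and v :: "real^'n \<Rightarrow> real"
  assumes F_cont: "continuous_on {(x, t, p, X). symmetric_mat X} (\<lambda>(x, t, p, X). F x t p X)"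
    and lam: "0 < lam" "lam \<le> Lam"
    and elliptic: "\<And>x t p X Q. symmetric_mat X \<Longrightarrow> symmetric_mat Q \<Longrightarrow> psd_mat Q \<Longrightarrow>
        lam * trace Q \<le> F x t p X - F x t p (X + Q) \<and> F x t p X - F x t p (X + Q) \<le> Lam * trace Q"
    and F_bound: "\<And>x t p. F x t p 0 \<le> - (b x \<bullet> p) + g x * norm p + c x * t"
    and b_lip: "locally_lipschitz b"
    and g_lip: "locally_lipschitz g"
    and c_cont: "continuous_on UNIV c"
    and g_nonneg: "\<And>x. g x \<ge> 0"
    and c_nonneg: "\<And>x. c x \<ge> 0"
    and Ro: "R\<^sub>o > 0"
    and growth: "\<And>x. norm x \<ge> R\<^sub>o \<Longrightarrow>
        b x \<bullet> x + g x * norm x \<le> c x * (norm x)\<^sup>2 * ln (norm x) + lam - (real CARD('n) - 1) * Lam"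
    and super: "viscosity_supersolution F v"
    and liminf: "\<forall>\<epsilon>>0. \<exists>R. \<forall>x. norm x \<ge> R \<longrightarrow> v x / ln (norm x) \<ge> - \<epsilon>"
    and alt: "(\<forall>x. c x = 0) \<or> (\<forall>x. v x \<le> 0)"
  shows "\<exists>k. \<forall>x. v x = k"
proof -
  interpret uniformly_elliptic F lam Lam b g c
    using lam elliptic F_bound g_nonneg by unfold_locales auto
  obtain x\<^sub>1 where "\<And>y. v x\<^sub>1 \<le> v y"
    using supersolution_attains_min[OF super c_nonneg alt growth liminf] by blast
  moreover have "c x * v x \<le> 0" for x
    using alt c_nonneg[of x] by (auto simp: mult_nonneg_nonpos)
  ultimately have "v x = v x\<^sub>1" for x
    using strong_minimum_principle[OF super continuous_on_locally_lipschitz[OF b_lip]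
        continuous_on_locally_lipschitz[OF g_lip]] by blast
  then show ?thesis by blast
qed

end
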